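(* Let $\rho>0$ and assume $\Gamma(0)<\Gamma(1)$ and $1+\rho\ln\mu(0)>0$. Then for every $\rho$-admissible scaling $n\mapsto L_n$, \[ \lim_{n\to\infty}\mathbb{E}[I^{(0)}_n(L_n)]=\begin{cases}\infty&\text{if } 1+\rho\ln\Gamma(0)<0,\\ 0&\text{if } 1+\rho\ln\Gamma(0)>0.\end{cases} \]
   Context: Homogeneous binary MAG model. Fix $\mu(0),\mu(1)\in(0,1)$ with $\mu(0)+\mu(1)=1$, and a symmetric $2\times2$ matrix $(q(a,b))$ with $q(0,1)=q(1,0)$ and $0<q(a,b)<1$. On a probability space, $\{A,A_\ell(u):\ell,u\ge1\}$ are i.i.d. $\{0,1\}$-valued with $\mathbb{P}[A=1]=\mu(1)$, independent of i.i.d. uniform$(0,1)$ variables $\{U(u,v):1\le u<v\}$, $U(v,u)=U(u,v)$. With $\mathbf A_L(u)=(A_1(u),\dots,A_L(u))$ and $Q_L(\mathbf a,\mathbf b)=\prod_{\ell=1}^Lq(a_\ell,b_\ell)$, the graph $\mathbb{M}(n;L)$ on $\{1,\dots,n\}$ has an edge between distinct $u,v$ iff $U(u,v)\le Q_L(\mathbf A_L(u),\mathbf A_L(v))$. Let $S_L(u)=A_1(u)+\dots+A_L(u)$. For $\ell\in\{0,\dots,L\}$, $I^{(\ell)}_n(L)$ denotes the number of nodes $u\in\{1,\dots,n\}$ that are isolated in $\mathbb{M}(n;L)$ and satisfy $S_L(u)=\ell$. $\Gamma(a)=\mathbb{E}[q(a,A)]$. A scaling $n\mapsto L_n$ of positive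 integers is $\rho$-admissible if $L_n\sim\rho\ln n$. *)

theory Defs
  imports "HOL-Probability.Probability" "HOL-Library.Landau_Symbols"
begin

text \<open>Binary attribute values are encoded as bool: True = 1, False = 0.
  mu b = mu(b), q a b = q(a,b).\<close>

definition Aidx :: "nat \<Rightarrow> nat \<Rightarrow> (nat \<times> nat) set" where
  "Aidx n L = {1..n} \<times> {1..L}"   (* (u, l) indexes A_l(u) *)

definition Uidx :: "nat \<Rightarrow> (nat \<times> nat) set" where
  "Uidx n = {(u, v). 1 \<le> u \<and> u < v \<and> v \<le> n}"

text \<open>Joint law of the finitely many variables A_l(u), U(u,v) that determine M(n;L):
  i.i.d. Bernoulli(mu(1)) attributes, independent of i.i.d. uniform(0,1) variables.\<close>
definition MAG_space :: "(bool \<Rightarrow> real) \<Rightarrow> nat \<Rightarrow> nat \<Rightarrow> ((nat \<times> nat \<Rightarrow> bool) \<times> (nat \<times> nat \<Rightarrow> real)) measure" where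
  "MAG_space mu n L =
     (PiM (Aidx n L) (\<lambda>_. measure_pmf (bernoulli_pmf (mu True))))
     \<Otimes>\<^sub>M (PiM (Uidx n) (\<lambda>_. uniform_measure lborel {0<..<1::real}))"

definition QL :: "(bool \<Rightarrow> bool \<Rightarrow> real) \<Rightarrow> nat \<Rightarrow> (nat \<times> nat \<Rightarrow> bool) \<Rightarrow> nat \<Rightarrow> nat \<Rightarrow> real" where
  "QL q L a u v = (\<Prod>l\<in>{1..L}. q (a (u, l)) (a (v, l)))"

definition MAG_edge :: "(bool \<Rightarrow> bool \<Rightarrow> real) \<Rightarrow> nat \<Rightarrow>
     (nat \<times> nat \<Rightarrow> bool) \<times> (nat \<times> nat \<Rightarrow> real) \<Rightarrow> nat \<Rightarrow> nat \<Rightarrow> bool" where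
  "MAG_edge q L \<omega> u v \<longleftrightarrow>
     u \<noteq> v \<and> snd \<omega> (min u v, max u v) \<le> QL q L (fst \<omega>) u v"

definition S_L :: "nat \<Rightarrow> (nat \<times> nat \<Rightarrow> bool) \<Rightarrow> nat \<Rightarrow> nat" where
  "S_L L a u = card {l \<in> {1..L}. a (u, l)}"

definition I_count :: "(bool \<Rightarrow> bool \<Rightarrow> real) \<Rightarrow> nat \<Rightarrow> nat \<Rightarrow> nat \<Rightarrow>
     (nat \<times> nat \<Rightarrow> bool) \<times> (nat \<times> nat \<Rightarrow> real) \<Rightarrow> nat" where
  "I_count q l n L \<omega> =
     card {u \<in> {1..n}. (\<forall>v\<in>{1..n}. \<not> MAG_edge q L \<omega> u v) \<and> S_L L (fst \<omega>) u = l}"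

definition expected_I :: "(bool \<Rightarrow> real) \<Rightarrow> (bool \<Rightarrow> bool \<Rightarrow> real) \<Rightarrow> nat \<Rightarrow> nat \<Rightarrow> nat \<Rightarrow> real" where
  "expected_I mu q l n L = integral\<^sup>L (MAG_space mu n L) (\<lambda>\<omega>. real (I_count q l n L \<omega>))"

definition Gamma_MAG :: "(bool \<Rightarrow> real) \<Rightarrow> (bool \<Rightarrow> bool \<Rightarrow> real) \<Rightarrow> bool \<Rightarrow> real" where
  "Gamma_MAG mu q a = mu False * q a False + mu True * q a True"   (* E[q(a,A)] *)

definition admissible :: "real \<Rightarrow> (nat \<Rightarrow> nat) \<Rightarrow> bool" where
  "admissible \<rho> L \<longleftrightarrow> (\<forall>n. 0 < L n) \<and>
     (\<lambda>n. real (L n)) \<sim>[at_top] (\<lambda>n. \<rho> * ln (real n))"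

end

theory Submission
  imports Defs "HOL-Real_Asymp.Real_Asymp"
begin

(* Given S_L(u) = 0, i.e. A_L(u) = 0 (probability mu(0)^L), the node u is isolated iff
   U(u,v) > Q_L(0, A_L(v)) for every v ~= u. These n - 1 events involve disjoint sets of
   attributes and of uniform variables, so they are independent, and each has probability
   1 - E[Q_L(0, A_L(v))] = 1 - Gamma(0)^L. Hence
     E[I^(0)_n(L)] = n mu(0)^L (1 - Gamma(0)^L)^(n-1).
   Along a rho-admissible scaling, n x^(L_n) = n^(1 + rho ln x + o(1)). If 1 + rho ln Gamma(0) < 0,
   then n Gamma(0)^(L_n) -> 0, so the last factor tends to 1 by Bernoulli's inequality, while
   n mu(0)^(L_n) -> infinity. If 1 + rho ln Gamma(0) > 0, then n Gamma(0)^(L_n) >= n^c for some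
   c > 0, and n (1 - Gamma(0)^(L_n))^(n-1) <= n exp(-(n-1) n^(c-1)) -> 0. *)

section \<open>Integrals over product measures\<close>

lemma measurable_component_PiM_UNIV:
  assumes "space M = UNIV"
  shows "(\<lambda>x. x i) \<in> measurable (PiM I (\<lambda>_. M)) M"
proof (cases "i \<in> I")
  case True
  then show ?thesis by (rule measurable_component_singleton)
next
  case False
  then have "\<forall>x\<in>space (PiM I (\<lambda>_. M)). x i = undefined"
    by (auto simp: space_PiM PiE_def extensional_def)
  then show ?thesis
    using assms by (subst measurable_cong[where g="\<lambda>_. undefined"]) auto
qed

lemma measurable_component_PiM_pmf:
  "(\<lambda>x. x i) \<in> measurable (PiM I (\<lambda>_. measure_pmf p)) (count_space UNIV)"
  using measurable_component_PiM_UNIV[of "measure_pmf p"] by (simp cong: measurable_cong_sets)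

lemma measurable_component_PiM_uniform:
  "(\<lambda>x. x i) \<in> borel_measurable (PiM I (\<lambda>_. uniform_measure lborel (S :: real set)))"
  using measurable_component_PiM_UNIV[of "uniform_measure lborel S"] by (simp cong: measurable_cong_sets)

lemma (in product_prob_space) indep_vars_components:
  "P.indep_vars M (\<lambda>i \<omega>. \<omega> i) I"
proof (cases "I = {}")
  case True
  then show ?thesis unfolding P.indep_vars_def P.indep_sets_def by simp
next
  case False
  have "distr (PiM I M) (PiM I M) (\<lambda>\<omega>. restrict \<omega> I) = distr (PiM I M) (PiM I M) (\<lambda>\<omega>. \<omega>)"
    by (rule distr_cong) (auto simp: space_PiM)
  also have "\<dots> = PiM I (\<lambda>i. distr (PiM I M) (M i) (\<lambda>\<omega>. \<omega> i))"
    by (subst distr_id, rule PiM_cong) (auto simp: PiM_component)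
  finally show ?thesis
    by (subst P.indep_vars_iff_distr_eq_PiM'[OF False]) (auto intro: measurable_component_singleton)
qed

lemma (in product_prob_space) integral_PiM_restrict:
  fixes f :: "_ \<Rightarrow> 'b::{banach, second_countable_topology}"
  assumes "finite I" "K \<subseteq> I" "f \<in> borel_measurable (PiM K M)"
  shows "(\<integral>\<omega>. f (restrict \<omega> K) \<partial>PiM I M) = (\<integral>x. f x \<partial>PiM K M)"
  using assms by (subst distr_restrict[OF assms(2,1)]) (auto simp: integral_distr measurable_restrict_subset)

lemma (in product_prob_space) integrable_PiM_restrict:
  fixes f :: "_ \<Rightarrow> 'b::{banach, second_countable_topology}"
  assumes "finite I" "K \<subseteq> I" "integrable (PiM K M) f"
  shows "integrable (PiM I M) (\<lambda>\<omega>. f (restrict \<omega> K))"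
proof -
  have "integrable (distr (PiM I M) (PiM K M) (\<lambda>\<omega>. restrict \<omega> K)) f"
    using assms by (simp flip: distr_restrict)
  then show ?thesis
    using assms by (subst (asm) integrable_distr_eq) (auto simp: measurable_restrict_subset)
qed

lemma (in product_prob_space) integral_PiM_prod_blocks:
  fixes f :: "'j \<Rightarrow> ('i \<Rightarrow> 'a) \<Rightarrow> real"
  assumes "finite I" "finite J" "disjoint_family_on K J" "\<And>j. j \<in> J \<Longrightarrow> K j \<subseteq> I"
    and integrable: "\<And>j. j \<in> J \<Longrightarrow> integrable (PiM (K j) M) (f j)"
  shows "(\<integral>\<omega>. (\<Prod>j\<in>J. f j (restrict \<omega> (K j))) \<partial>PiM I M) = (\<Prod>j\<in>J. \<integral>x. f j x \<partial>PiM (K j) M)"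
proof -
  have "P.indep_vars (\<lambda>j. PiM (K j) M) (\<lambda>j \<omega>. restrict \<omega> (K j)) J"
    using P.indep_vars_restrict[OF indep_vars_components, of J K] assms(3,4) by simp
  then have "P.indep_vars (\<lambda>_. borel) (\<lambda>j \<omega>. f j (restrict \<omega> (K j))) J"
    by (rule P.indep_vars_compose2) (use integrable in auto)
  then have "(\<integral>\<omega>. (\<Prod>j\<in>J. f j (restrict \<omega> (K j))) \<partial>PiM I M) = (\<Prod>j\<in>J. \<integral>\<omega>. f j (restrict \<omega> (K j)) \<partial>PiM I M)"
    using assms by (intro P.indep_vars_lebesgue_integral integrable_PiM_restrict) auto
  also have "\<dots> = (\<Prod>j\<in>J. \<integral>x. f j x \<partial>PiM (K j) M)"
    using assms by (intro prod.cong integral_PiM_restrict) auto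
  finally show ?thesis .
qed

lemma (in product_prob_space) integral_PiM_prod_subset:
  fixes f :: "'i \<Rightarrow> 'a \<Rightarrow> real"
  assumes "finite I" "J \<subseteq> I" "\<And>i. i \<in> J \<Longrightarrow> integrable (M i) (f i)"
  shows "(\<integral>\<omega>. (\<Prod>i\<in>J. f i (\<omega> i)) \<partial>PiM I M) = (\<Prod>i\<in>J. integral\<^sup>L (M i) (f i))"
proof -
  have fin: "finite J" using assms finite_subset by blast
  have "(\<integral>\<omega>. (\<Prod>i\<in>J. f i (\<omega> i)) \<partial>PiM I M) = (\<integral>\<omega>. (\<Prod>i\<in>J. f i (restrict \<omega> J i)) \<partial>PiM I M)"
    by simp
  also have "\<dots> = (\<integral>x. (\<Prod>i\<in>J. f i (x i)) \<partial>PiM J M)"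
    using assms fin by (intro integral_PiM_restrict borel_measurable_integrable product_integrable_prod) auto
  also have "\<dots> = (\<Prod>i\<in>J. integral\<^sup>L (M i) (f i))"
    using assms fin by (intro product_integral_prod) auto
  finally show ?thesis .
qed

lemma prob_space_uniform_01: "prob_space (uniform_measure lborel {0<..<1::real})"
  by (rule prob_space_uniform_measure) auto

lemma integral_uniform_01_greater:
  fixes c :: real
  assumes "0 \<le> c" "c \<le> 1"
  shows "(\<integral>x. (if c < x then 1 else 0) \<partial>uniform_measure lborel {0<..<1::real}) = 1 - c"
proof -
  have "(\<integral>x. (if c < x then 1 else 0) \<partial>uniform_measure lborel {0<..<1::real})
      = (\<integral>x. indicator {c<..} x \<partial>uniform_measure lborel {0<..<1::real})"
    by (intro Bochner_Integration.integral_cong) (auto simp: indicator_def)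
  also have "\<dots> = measure lborel ({0<..<1} \<inter> {c<..}) / measure lborel {0<..<1::real}"
    by (simp add: measure_uniform_measure)
  also have "{0<..<1} \<inter> {c<..} = {c<..<1}"
    using assms by auto
  finally show ?thesis
    using assms by simp
qed

lemma integrable_PiM_pmf_prod:
  fixes k :: "'a::finite \<Rightarrow> real"
  assumes "finite K"
  shows "integrable (PiM K (\<lambda>_. measure_pmf M)) (\<lambda>x. \<Prod>i\<in>K. k (x i))"
proof -
  interpret product_prob_space "\<lambda>_. measure_pmf M" K
    by (intro product_prob_spaceI measure_pmf.prob_space_axioms)
  show ?thesis
    using assms by (intro product_integrable_prod) (auto intro: integrable_measure_pmf_finite)
qed

lemma integral_PiM_bernoulli_prod:
  assumes "finite K" "0 \<le> p" "p \<le> 1"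
  shows "(\<integral>x. (\<Prod>i\<in>K. k (x i)) \<partial>PiM K (\<lambda>_. measure_pmf (bernoulli_pmf p)))
       = (p * k True + (1 - p) * k False) ^ card K"
proof -
  interpret product_prob_space "\<lambda>_. measure_pmf (bernoulli_pmf p)" K
    by (intro product_prob_spaceI measure_pmf.prob_space_axioms)
  show ?thesis
    using assms by (subst product_integral_prod) (auto intro: integrable_measure_pmf_finite simp: mult.commute)
qed

lemma prod_if_1_0:
  "finite A \<Longrightarrow> (\<Prod>x\<in>A. if P x then 1 else 0) = (if \<forall>x\<in>A. P x then 1 else (0 :: 'a :: comm_semiring_1))"
  by (induction A rule: finite_induct) auto

section \<open>Elementary asymptotics\<close>

lemma eventually_powr_le_of_ln_ratio:
  assumes lim: "(\<lambda>n. ln (f n) / ln (real n)) \<longlonglongrightarrow> a" and "c < a" and pos: "\<forall>\<^sub>F n in sequentially. 0 < f n"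
  shows "\<forall>\<^sub>F n in sequentially. real n powr c \<le> f n"
  using order_tendstoD(1)[OF lim \<open>c < a\<close>] pos eventually_gt_at_top[of 1]
proof eventually_elim
  case (elim n)
  then have "c * ln (real n) < ln (f n)"
    by (simp add: field_simps)
  then have "exp (c * ln (real n)) < exp (ln (f n))"
    by (simp only: exp_less_cancel_iff)
  then show ?case
    using elim by (simp add: powr_def)
qed

lemma eventually_le_powr_of_ln_ratio:
  assumes lim: "(\<lambda>n. ln (f n) / ln (real n)) \<longlonglongrightarrow> a" and "a < c" and pos: "\<forall>\<^sub>F n in sequentially. 0 < f n"
  shows "\<forall>\<^sub>F n in sequentially. f n \<le> real n powr c"
  using order_tendstoD(2)[OF lim \<open>a < c\<close>] pos eventually_gt_at_top[of 1]
proof eventually_elim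
  case (elim n)
  then have "ln (f n) < c * ln (real n)"
    by (simp add: field_simps)
  then have "exp (ln (f n)) < exp (c * ln (real n))"
    by (simp only: exp_less_cancel_iff)
  then show ?case
    using elim by (simp add: powr_def)
qed

lemma one_minus_power_tendsto_1:
  fixes y :: "nat \<Rightarrow> real"
  assumes y: "\<And>n. 0 \<le> y n" "\<And>n. y n \<le> 1" and lim: "(\<lambda>n. real n * y n) \<longlonglongrightarrow> 0"
  shows "(\<lambda>n. (1 - y n) ^ (n - 1)) \<longlonglongrightarrow> 1"
proof (rule tendsto_sandwich)
  show "\<forall>\<^sub>F n in sequentially. 1 - real n * y n \<le> (1 - y n) ^ (n - 1)"
  proof (rule always_eventually, rule allI)
    fix n
    have "1 + real (n - 1) * - y n \<le> (1 + - y n) ^ (n - 1)"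
      using y by (intro Bernoulli_inequality) auto
    moreover have "real (n - 1) * y n \<le> real n * y n"
      using y by (intro mult_right_mono) auto
    ultimately show "1 - real n * y n \<le> (1 - y n) ^ (n - 1)"
      by simp
  qed
  show "\<forall>\<^sub>F n in sequentially. (1 - y n) ^ (n - 1) \<le> 1"
    using y by (intro always_eventually allI power_le_one) auto
  show "(\<lambda>n. 1 - real n * y n) \<longlonglongrightarrow> 1"
    using tendsto_diff[OF tendsto_const lim, of 1] by simp
qed simp

lemma n_times_one_minus_power_tendsto_0:
  fixes y :: "nat \<Rightarrow> real"
  assumes y: "\<And>n. 0 \<le> y n" "\<And>n. y n \<le> 1" and "0 < c"
    and lower: "\<forall>\<^sub>F n in sequentially. real n powr c \<le> real n * y n"
  shows "(\<lambda>n. real n * (1 - y n) ^ (n - 1)) \<longlonglongrightarrow> 0"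
proof (rule tendsto_sandwich)
  show "\<forall>\<^sub>F n in sequentially. 0 \<le> real n * (1 - y n) ^ (n - 1)"
    using y by auto
  show "\<forall>\<^sub>F n in sequentially. real n * (1 - y n) ^ (n - 1) \<le> real n * exp (- (real n - 1) * (real n powr c / real n))"
    using lower eventually_gt_at_top[of 0]
  proof eventually_elim
    case (elim n)
    have "(1 - y n) ^ (n - 1) \<le> exp (- y n) ^ (n - 1)"
      using y by (intro power_mono) (auto simp: exp_ge_add_one_self[of "- y n", simplified])
    also have "\<dots> = exp (- (real n - 1) * y n)"
      using elim by (simp add: of_nat_diff algebra_simps flip: exp_of_nat_mult)
    also have "\<dots> \<le> exp (- (real n - 1) * (real n powr c / real n))"
    proof -
      have "real n powr c / real n \<le> y n"
        using elim by (simp add: divide_le_eq mult.commute)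
      then have "(real n - 1) * (real n powr c / real n) \<le> (real n - 1) * y n"
        using elim by (intro mult_left_mono) auto
      then show ?thesis
        unfolding exp_le_cancel_iff mult_minus_left neg_le_iff_le .
    qed
    finally show ?case
      by (simp add: mult_left_mono)
  qed
  show "(\<lambda>n. real n * exp (- (real n - 1) * (real n powr c / real n))) \<longlonglongrightarrow> 0"
    using \<open>0 < c\<close> by real_asymp
qed simp

section \<open>The expected number of isolated nodes of type 0\<close>

abbreviation attribute_space :: "real \<Rightarrow> nat \<Rightarrow> nat \<Rightarrow> (nat \<times> nat \<Rightarrow> bool) measure" where
  "attribute_space p n L \<equiv> PiM (Aidx n L) (\<lambda>_. measure_pmf (bernoulli_pmf p))"

abbreviation threshold_space :: "nat \<Rightarrow> (nat \<times> nat \<Rightarrow> real) measure" where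
  "threshold_space n \<equiv> PiM (Uidx n) (\<lambda>_. uniform_measure lborel {0<..<1::real})"

lemma finite_Uidx [simp]: "finite (Uidx n)"
  by (rule finite_subset[of _ "{1..n} \<times> {1..n}"]) (auto simp: Uidx_def)

lemma integral_threshold_space_all_greater:
  fixes c :: "nat \<Rightarrow> real"
  assumes u: "u \<in> {1..n}" and c: "\<And>v. 0 \<le> c v" "\<And>v. c v \<le> 1"
  shows "(\<integral>U. (if \<forall>v\<in>{1..n} - {u}. c v < U (min u v, max u v) then 1 else 0) \<partial>threshold_space n)
         = (\<Prod>v\<in>{1..n} - {u}. 1 - c v)"
proof -
  interpret product_prob_space "\<lambda>_. uniform_measure lborel {0<..<1::real}" "Uidx n"
    by (intro product_prob_spaceI prob_space_uniform_01)
  define edge where "edge v = (min u v, max u v)" for v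
  define other where "other i = fst i + snd i - u" for i :: "nat \<times> nat"
  have other_edge: "other (edge v) = v" for v
    by (simp add: other_def edge_def)
  then have inj: "inj_on edge ({1..n} - {u})"
    by (metis inj_on_inverseI)
  have "(\<integral>U. (if \<forall>v\<in>{1..n} - {u}. c v < U (edge v) then 1 else 0 :: real) \<partial>threshold_space n)
      = (\<integral>U. (\<Prod>i\<in>edge ` ({1..n} - {u}). (if c (other i) < U i then 1 else 0)) \<partial>threshold_space n)"
    by (subst prod.reindex[OF inj]) (simp add: other_edge prod_if_1_0)
  also have "\<dots> = (\<Prod>i\<in>edge ` ({1..n} - {u}). 1 - c (other i))"
    using u c
    by (subst integral_PiM_prod_subset[OF finite_Uidx])
       (auto simp: edge_def Uidx_def integral_uniform_01_greater
             intro!: M.integrable_const_bound[where B=1])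
  also have "\<dots> = (\<Prod>v\<in>{1..n} - {u}. 1 - c v)"
    by (subst prod.reindex[OF inj]) (simp add: other_edge)
  finally show ?thesis
    by (simp add: edge_def)
qed

lemma row_eq_Pair_image: "{v} \<times> {1..L} = Pair v ` {1..L :: nat}"
  by auto

lemma integrable_attribute_row:
  fixes k :: "bool \<Rightarrow> real" and L :: nat
  shows "integrable (PiM ({v} \<times> {1..L}) (\<lambda>_. measure_pmf M)) (\<lambda>x. \<Prod>l\<in>{1..L}. k (x (v, l)))"
proof -
  have row_prod: "(\<lambda>x. \<Prod>l\<in>{1..L}. k (x (v, l))) = (\<lambda>x. \<Prod>i\<in>Pair v ` {1..L}. k (x i))"
    by (simp add: prod.reindex inj_on_def)
  show ?thesis
    unfolding row_eq_Pair_image row_prod by (simp add: integrable_PiM_pmf_prod)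
qed

lemma integral_attribute_row:
  fixes L :: nat
  assumes "0 \<le> p" "p \<le> 1"
  shows "(\<integral>x. (\<Prod>l\<in>{1..L}. k (x (v, l))) \<partial>PiM ({v} \<times> {1..L}) (\<lambda>_. measure_pmf (bernoulli_pmf p)))
       = (p * k True + (1 - p) * k False) ^ L"
  unfolding row_eq_Pair_image using integral_PiM_bernoulli_prod[of "Pair v ` {1..L}" p k] assms
  by (simp add: prod.reindex inj_on_def card_image)

lemma integral_attribute_space_rows:
  fixes h g :: "bool \<Rightarrow> real"
  assumes u: "u \<in> {1..n}" and p: "0 \<le> p" "p \<le> 1"
  shows "(\<integral>a. (\<Prod>l\<in>{1..L}. h (a (u, l))) * (\<Prod>v\<in>{1..n} - {u}. 1 - (\<Prod>l\<in>{1..L}. g (a (v, l))))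
            \<partial>attribute_space p n L)
       = (p * h True + (1 - p) * h False) ^ L * (1 - (p * g True + (1 - p) * g False) ^ L) ^ (n - 1)"
proof -
  let ?B = "measure_pmf (bernoulli_pmf p)"
  interpret product_prob_space "\<lambda>_. ?B" "Aidx n L"
    by (intro product_prob_spaceI measure_pmf.prob_space_axioms)
  define row where "row v = {v} \<times> {1..L}" for v :: nat
  define f where "f v x = (if v = u then \<Prod>l\<in>{1..L}. h (x (v, l)) else 1 - (\<Prod>l\<in>{1..L}. g (x (v, l))))"
    for v and x :: "nat \<times> nat \<Rightarrow> bool"
  have integrable_f: "integrable (PiM (row v) (\<lambda>_. ?B)) (f v)"
    and integral_f: "(\<integral>x. f v x \<partial>PiM (row v) (\<lambda>_. ?B)) =
      (if v = u then (p * h True + (1 - p) * h False) ^ L else 1 - (p * g True + (1 - p) * g False) ^ L)"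
    for v
  proof -
    interpret row: prob_space "PiM (row v) (\<lambda>_. ?B)"
      by (intro prob_space_PiM measure_pmf.prob_space_axioms)
    show "integrable (PiM (row v) (\<lambda>_. ?B)) (f v)"
      using integrable_attribute_row[of v L "bernoulli_pmf p" h, folded row_def]
        integrable_attribute_row[of v L "bernoulli_pmf p" g, folded row_def]
      unfolding f_def by (cases "v = u") auto
    show "(\<integral>x. f v x \<partial>PiM (row v) (\<lambda>_. ?B)) =
      (if v = u then (p * h True + (1 - p) * h False) ^ L else 1 - (p * g True + (1 - p) * g False) ^ L)"
      using integrable_attribute_row[of v L "bernoulli_pmf p" g, folded row_def]
        integral_attribute_row[OF p, of v L h, folded row_def] integral_attribute_row[OF p, of v L g, folded row_def]
      unfolding f_def by (cases "v = u") (simp_all add: row.prob_space)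
  qed
  have "(\<Prod>v\<in>{1..n}. f v (restrict a (row v)))
      = f u (restrict a (row u)) * (\<Prod>v\<in>{1..n} - {u}. f v (restrict a (row v)))" for a
    using u by (intro prod.remove) auto
  also have "\<dots> a = (\<Prod>l\<in>{1..L}. h (a (u, l))) * (\<Prod>v\<in>{1..n} - {u}. 1 - (\<Prod>l\<in>{1..L}. g (a (v, l))))" for a
    by (auto simp: f_def row_def intro!: arg_cong2[where f=times] prod.cong arg_cong[where f="\<lambda>x. 1 - x"])
  finally have "(\<integral>a. (\<Prod>l\<in>{1..L}. h (a (u, l))) * (\<Prod>v\<in>{1..n} - {u}. 1 - (\<Prod>l\<in>{1..L}. g (a (v, l))))
      \<partial>attribute_space p n L) = (\<integral>a. (\<Prod>v\<in>{1..n}. f v (restrict a (row v))) \<partial>attribute_space p n L)"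
    by simp
  also have "\<dots> = (\<Prod>v\<in>{1..n}. \<integral>x. f v x \<partial>PiM (row v) (\<lambda>_. ?B))"
    using integrable_f
    by (intro integral_PiM_prod_blocks) (auto simp: row_def Aidx_def disjoint_family_on_def)
  also have "\<dots> = (p * h True + (1 - p) * h False) ^ L * (1 - (p * g True + (1 - p) * g False) ^ L) ^ (n - 1)"
    using u by (simp add: integral_f prod.remove)
  finally show ?thesis .
qed

lemma measurable_isolated_type0:
  fixes q :: "bool \<Rightarrow> bool \<Rightarrow> real"
  shows "(\<lambda>\<omega>. if (\<forall>v\<in>{1..n}. \<not> MAG_edge q L \<omega> u v) \<and> S_L L (fst \<omega>) u = 0 then 1 else 0 :: real)
     \<in> borel_measurable (attribute_space p n L \<Otimes>\<^sub>M threshold_space n)"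
proof -
  have [measurable]: "(\<lambda>\<omega>. fst \<omega> i) \<in> measurable (attribute_space p n L \<Otimes>\<^sub>M threshold_space n) (count_space UNIV)"
    for i :: "nat \<times> nat"
    by (rule measurable_compose[OF measurable_fst measurable_component_PiM_pmf])
  have [measurable]: "(\<lambda>\<omega>. snd \<omega> i) \<in> borel_measurable (attribute_space p n L \<Otimes>\<^sub>M threshold_space n)"
    for i :: "nat \<times> nat"
    by (rule measurable_compose[OF measurable_snd measurable_component_PiM_uniform])
  have S_L_eq_0: "S_L L a u = 0 \<longleftrightarrow> (\<forall>l\<in>{1..L}. \<not> a (u, l))" for a
    by (auto simp: S_L_def)
  \<comment> \<open>The measurable method cannot decompose an arbitrary function of two Booleans, but it
    handles case distinctions on measurable predicates.\<close>
  have q_cases: "q a b = (if a then if b then q True True else q True False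
                          else if b then q False True else q False False)" for a b
    by (cases a; cases b) auto
  show ?thesis
    unfolding MAG_edge_def QL_def S_L_eq_0 by (subst q_cases) measurable
qed

lemma integral_threshold_space_isolated_type0:
  fixes q :: "bool \<Rightarrow> bool \<Rightarrow> real"
  assumes u: "u \<in> {1..n}" and q: "\<And>a b. 0 \<le> q a b" "\<And>a b. q a b \<le> 1"
  shows "(\<integral>U. (if (\<forall>v\<in>{1..n}. \<not> MAG_edge q L (a, U) u v) \<and> S_L L a u = 0 then 1 else 0) \<partial>threshold_space n)
       = (\<Prod>l\<in>{1..L}. if a (u, l) then 0 else 1) * (\<Prod>v\<in>{1..n} - {u}. 1 - (\<Prod>l\<in>{1..L}. q False (a (v, l))))"
proof (cases "S_L L a u = 0")
  case True
  then have a_u: "\<not> a (u, l)" if "l \<in> {1..L}" for l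
    using that by (auto simp: S_L_def)
  have QL_bounds: "0 \<le> QL q L a u v" "QL q L a u v \<le> 1" for v
    unfolding QL_def using q by (auto intro: prod_nonneg prod_le_1)
  have "(\<integral>U. (if (\<forall>v\<in>{1..n}. \<not> MAG_edge q L (a, U) u v) \<and> S_L L a u = 0 then 1 else 0) \<partial>threshold_space n)
      = (\<integral>U. (if \<forall>v\<in>{1..n} - {u}. QL q L a u v < U (min u v, max u v) then 1 else 0) \<partial>threshold_space n)"
    using True by (intro Bochner_Integration.integral_cong) (auto simp: MAG_edge_def not_le)
  also have "\<dots> = (\<Prod>v\<in>{1..n} - {u}. 1 - QL q L a u v)"
    using u QL_bounds by (rule integral_threshold_space_all_greater)
  also have "\<dots> = (\<Prod>v\<in>{1..n} - {u}. 1 - (\<Prod>l\<in>{1..L}. q False (a (v, l))))"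
    using a_u by (auto simp: QL_def intro!: prod.cong)
  finally show ?thesis
    using a_u by simp
next
  case False
  then obtain l where "l \<in> {1..L}" "a (u, l)"
    by (auto simp: S_L_def)
  then have "(\<Prod>l\<in>{1..L}. if a (u, l) then 0 else 1 :: real) = 0"
    by (intro prod_zero) auto
  then show ?thesis
    using False by simp
qed

lemma expected_I_type0:
  fixes mu :: "bool \<Rightarrow> real" and q :: "bool \<Rightarrow> bool \<Rightarrow> real"
  assumes mu: "0 \<le> mu True" "mu True \<le> 1" "mu False + mu True = 1"
    and q: "\<And>a b. 0 \<le> q a b" "\<And>a b. q a b \<le> 1"
  shows "expected_I mu q 0 n L = real n * mu False ^ L * (1 - Gamma_MAG mu q False ^ L) ^ (n - 1)"
proof -
  let ?MA = "attribute_space (mu True) n L" and ?MU = "threshold_space n"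
  interpret MA: prob_space ?MA
    by (intro prob_space_PiM measure_pmf.prob_space_axioms)
  interpret MU: prob_space ?MU
    by (intro prob_space_PiM prob_space_uniform_01)
  interpret pair_prob_space ?MA ?MU ..
  have mu_False: "mu False = 1 - mu True"
    using mu by simp
  define isolated where "isolated u \<omega> =
    (if (\<forall>v\<in>{1..n}. \<not> MAG_edge q L \<omega> u v) \<and> S_L L (fst \<omega>) u = 0 then 1 else 0 :: real)" for u \<omega>
  have integrable: "integrable (?MA \<Otimes>\<^sub>M ?MU) (isolated u)" for u
    unfolding isolated_def
    by (rule integrable_const_bound[where B=1]) (simp, rule measurable_isolated_type0)
  have "expected_I mu q 0 n L = (\<integral>\<omega>. (\<Sum>u\<in>{1..n}. isolated u \<omega>) \<partial>?MA \<Otimes>\<^sub>M ?MU)"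
    unfolding expected_I_def MAG_space_def I_count_def isolated_def
    by (simp flip: sum.inter_filter)
  also have "\<dots> = (\<Sum>u\<in>{1..n}. \<integral>a. (\<integral>U. isolated u (a, U) \<partial>?MU) \<partial>?MA)"
    using integrable by (simp add: integral_fst')
  also have "\<dots> = (\<Sum>u\<in>{1..n}. mu False ^ L * (1 - Gamma_MAG mu q False ^ L) ^ (n - 1))"
  proof (rule sum.cong[OF refl])
    fix u assume u: "u \<in> {1..n}"
    have "(\<integral>a. (\<integral>U. isolated u (a, U) \<partial>?MU) \<partial>?MA)
      = (\<integral>a. (\<Prod>l\<in>{1..L}. if a (u, l) then 0 else 1) *
               (\<Prod>v\<in>{1..n} - {u}. 1 - (\<Prod>l\<in>{1..L}. q False (a (v, l)))) \<partial>?MA)"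
      unfolding isolated_def fst_conv using u q by (intro Bochner_Integration.integral_cong refl integral_threshold_space_isolated_type0)
    also have "\<dots> = mu False ^ L * (1 - Gamma_MAG mu q False ^ L) ^ (n - 1)"
      using u mu by (subst integral_attribute_space_rows) (auto simp: Gamma_MAG_def algebra_simps mu_False)
    finally show "(\<integral>a. (\<integral>U. isolated u (a, U) \<partial>?MU) \<partial>?MA) = mu False ^ L * (1 - Gamma_MAG mu q False ^ L) ^ (n - 1)" .
  qed
  finally show ?thesis
    by simp
qed

section \<open>Asymptotics along admissible scalings\<close>

lemma admissible_ln_ratio:
  assumes adm: "admissible \<rho> L" and x: "0 < x"
  shows "(\<lambda>n. ln (real n * x ^ L n) / ln (real n)) \<longlonglongrightarrow> 1 + \<rho> * ln x"
proof -
  have "(\<lambda>n. \<rho> * ln (real n) / ln (real n)) \<sim>[sequentially] (\<lambda>n. real (L n) / ln (real n))"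
    using adm unfolding admissible_def
    by (intro asymp_equiv_intros) (simp_all add: asymp_equiv_sym)
  moreover have "(\<lambda>n. \<rho> * ln (real n) / ln (real n)) \<longlonglongrightarrow> \<rho>"
  proof (rule tendsto_eventually)
    show "\<forall>\<^sub>F n in sequentially. \<rho> * ln (real n) / ln (real n) = \<rho>"
      using eventually_gt_at_top[of 1] by eventually_elim simp
  qed
  ultimately have "(\<lambda>n. real (L n) / ln (real n)) \<longlonglongrightarrow> \<rho>"
    by (rule asymp_equiv_tendsto_transfer)
  then have "(\<lambda>n. 1 + real (L n) / ln (real n) * ln x) \<longlonglongrightarrow> 1 + \<rho> * ln x"
    by (intro tendsto_intros)
  moreover have "\<forall>\<^sub>F n in sequentially. 1 + real (L n) / ln (real n) * ln x = ln (real n * x ^ L n) / ln (real n)"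
    using eventually_gt_at_top[of 1] by eventually_elim (use x in \<open>simp add: ln_mult ln_realpow field_simps\<close>)
  ultimately show ?thesis
    by (rule Lim_transform_eventually)
qed

lemma eventually_n_times_power_pos:
  fixes x :: real
  assumes "0 < x"
  shows "\<forall>\<^sub>F n in sequentially. 0 < real n * x ^ k n"
  using eventually_gt_at_top[of "0::nat"] by eventually_elim (use assms in simp)

lemma admissible_eventually_powr_le:
  assumes "admissible \<rho> L" "0 < x" "c < 1 + \<rho> * ln x"
  shows "\<forall>\<^sub>F n in sequentially. real n powr c \<le> real n * x ^ L n"
  using admissible_ln_ratio[OF assms(1,2)] assms(3) eventually_n_times_power_pos[OF assms(2)]
  by (rule eventually_powr_le_of_ln_ratio)

lemma admissible_eventually_le_powr:
  assumes "admissible \<rho> L" "0 < x" "1 + \<rho> * ln x < c"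
  shows "\<forall>\<^sub>F n in sequentially. real n * x ^ L n \<le> real n powr c"
  using admissible_ln_ratio[OF assms(1,2)] assms(3) eventually_n_times_power_pos[OF assms(2)]
  by (rule eventually_le_powr_of_ln_ratio)

lemma admissible_isolated_at_top:
  fixes m g :: real
  assumes adm: "admissible \<rho> L" and m: "0 < m" and g: "0 < g" "g \<le> 1"
    and "1 + \<rho> * ln m > 0" and "1 + \<rho> * ln g < 0"
  shows "filterlim (\<lambda>n. real n * m ^ L n * (1 - g ^ L n) ^ (n - 1)) at_top sequentially"
proof -
  have "\<forall>\<^sub>F n in sequentially. real n powr ((1 + \<rho> * ln m) / 2) \<le> real n * m ^ L n"
    using adm m \<open>1 + \<rho> * ln m > 0\<close> by (intro admissible_eventually_powr_le) auto
  moreover have "filterlim (\<lambda>n. real n powr ((1 + \<rho> * ln m) / 2)) at_top sequentially"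
    using \<open>1 + \<rho> * ln m > 0\<close>
    by (intro filterlim_compose[OF real_powr_at_top filterlim_real_sequentially]) simp
  ultimately have m_part: "filterlim (\<lambda>n. real n * m ^ L n) at_top sequentially"
    by (rule filterlim_at_top_mono[rotated])
  have "\<forall>\<^sub>F n in sequentially. 0 \<le> real n * g ^ L n"
    using g by simp
  moreover have "\<forall>\<^sub>F n in sequentially. real n * g ^ L n \<le> real n powr ((1 + \<rho> * ln g) / 2)"
    using adm g \<open>1 + \<rho> * ln g < 0\<close> by (intro admissible_eventually_le_powr) auto
  moreover have "(\<lambda>n. real n powr ((1 + \<rho> * ln g) / 2)) \<longlonglongrightarrow> 0"
    using \<open>1 + \<rho> * ln g < 0\<close> by (intro tendsto_neg_powr filterlim_real_sequentially) simp
  ultimately have "(\<lambda>n. real n * g ^ L n) \<longlonglongrightarrow> 0"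
    by (rule tendsto_sandwich[OF _ _ tendsto_const])
  then have g_part: "(\<lambda>n. (1 - g ^ L n) ^ (n - 1)) \<longlonglongrightarrow> 1"
    using g by (intro one_minus_power_tendsto_1) (auto intro: power_le_one)
  show ?thesis
    by (rule filterlim_at_top_mult_tendsto_pos[OF g_part _ m_part]) simp
qed

lemma admissible_isolated_tendsto_0:
  fixes m g :: real
  assumes adm: "admissible \<rho> L" and m: "0 \<le> m" "m \<le> 1" and g: "0 < g" "g \<le> 1"
    and "1 + \<rho> * ln g > 0"
  shows "(\<lambda>n. real n * m ^ L n * (1 - g ^ L n) ^ (n - 1)) \<longlonglongrightarrow> 0"
proof (rule tendsto_sandwich)
  have g_power: "0 \<le> g ^ k" "g ^ k \<le> 1" for k
    using g by (auto intro: power_le_one)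
  then have factor_nonneg: "0 \<le> (1 - g ^ k) ^ j" for k j
    by simp
  show "\<forall>\<^sub>F n in sequentially. 0 \<le> real n * m ^ L n * (1 - g ^ L n) ^ (n - 1)"
    using m factor_nonneg by simp
  show "\<forall>\<^sub>F n in sequentially. real n * m ^ L n * (1 - g ^ L n) ^ (n - 1) \<le> real n * (1 - g ^ L n) ^ (n - 1)"
    using m factor_nonneg by (intro always_eventually allI mult_right_mono mult_left_le power_le_one) auto
  have "\<forall>\<^sub>F n in sequentially. real n powr ((1 + \<rho> * ln g) / 2) \<le> real n * g ^ L n"
    using adm g \<open>1 + \<rho> * ln g > 0\<close> by (intro admissible_eventually_powr_le) auto
  then show "(\<lambda>n. real n * (1 - g ^ L n) ^ (n - 1)) \<longlonglongrightarrow> 0"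
    using g_power \<open>1 + \<rho> * ln g > 0\<close>
    by (intro n_times_one_minus_power_tendsto_0[where c="(1 + \<rho> * ln g) / 2"]) auto
qed simp

theorem proposition2:
  fixes mu :: "bool \<Rightarrow> real" and q :: "bool \<Rightarrow> bool \<Rightarrow> real" and \<rho> :: real
  assumes mu_pos: "\<And>b. 0 < mu b" and mu_lt1: "\<And>b. mu b < 1"
    and mu_sum: "mu False + mu True = 1"
    and q_sym: "q True False = q False True"
    and q_pos: "\<And>a b. 0 < q a b" and q_lt1: "\<And>a b. q a b < 1"
    and rho_pos: "0 < \<rho>"
    and Gamma_lt: "Gamma_MAG mu q False < Gamma_MAG mu q True"
    and mu0: "1 + \<rho> * ln (mu False) > 0"
  shows "\<forall>L. admissible \<rho> L \<longrightarrow>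
     ((1 + \<rho> * ln (Gamma_MAG mu q False) < 0 \<longrightarrow>
         filterlim (\<lambda>n. expected_I mu q 0 n (L n)) at_top sequentially) \<and>
      (1 + \<rho> * ln (Gamma_MAG mu q False) > 0 \<longrightarrow>
         (\<lambda>n. expected_I mu q 0 n (L n)) \<longlonglongrightarrow> 0))"
proof (intro allI impI conjI)
  fix L :: "nat \<Rightarrow> nat"
  assume adm: "admissible \<rho> L"
  let ?m = "mu False" and ?g = "Gamma_MAG mu q False"
  have expected: "(\<lambda>n. expected_I mu q 0 n (L n)) = (\<lambda>n. real n * ?m ^ L n * (1 - ?g ^ L n) ^ (n - 1))"
    using mu_pos mu_lt1 mu_sum q_pos q_lt1 by (intro ext expected_I_type0) (auto intro: less_imp_le)
  have "0 < ?g"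
    using mu_pos q_pos by (simp add: Gamma_MAG_def add_pos_pos)
  moreover have "?g \<le> mu False + mu True"
    unfolding Gamma_MAG_def using mu_pos q_lt1
    by (intro add_mono mult_left_le) (auto intro: less_imp_le)
  ultimately have g: "0 < ?g" "?g \<le> 1"
    using mu_sum by auto
  show "filterlim (\<lambda>n. expected_I mu q 0 n (L n)) at_top sequentially" if "1 + \<rho> * ln ?g < 0"
    unfolding expected using adm mu_pos g mu0 that by (rule admissible_isolated_at_top)
  show "(\<lambda>n. expected_I mu q 0 n (L n)) \<longlonglongrightarrow> 0" if "1 + \<rho> * ln ?g > 0"
    unfolding expected using adm mu_pos mu_lt1 g that
    by (intro admissible_isolated_tendsto_0) (auto intro: less_imp_le)
qed

end
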